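(* Let $\lambda\in P^+$ and let $\lambda_1,\mu_1\in P^+$ with $\lambda-\lambda_1,\lambda-\mu_1\in P^+$, such that $(\lambda_1,\lambda-\lambda_1)\preceq(\mu_1,\lambda-\mu_1)$. Then there is a canonical surjective homomorphism of $\mathfrak{sl}_n\otimes\mathbb C[t]$-modules $F_{\mu_1,\lambda-\mu_1}\twoheadrightarrow F_{\lambda_1,\lambda-\lambda_1}$.
   Context: $\mathfrak{sl}_n=\mathfrak n^+\oplus\mathfrak h\oplus\mathfrak n^-$, $R^+$ positive roots, $P^+$ dominant integral weights; for $\alpha\in R^+$ fix an $\mathfrak{sl}_2$-triple $e_\alpha,f_\alpha,h_\alpha$ with $f_\alpha\in\mathfrak g_{-\alpha}$. For $\lambda\in P^+$, $P(\lambda,2)$ is the set of pairs $(\lambda_1,\lambda_2)\in P^+\times P^+$ with $\lambda_1+\lambda_2=\lambda$ (modulo swapping the two entries), with the partial order $(\lambda_1,\lambda-\lambda_1)\preceq(\mu_1,\lambda-\mu_1)$ iff $\min\{\lambda_1(h_\alpha),(\lambda-\lambda_1)(h_\alpha)\}\le\min\{\mu_1(h_\alpha),(\lambda-\mu_1)(h_\alpha)\}$ for all $\alpha\in R^+$. The current algebra $\mathfrak{sl}_n\otimes\mathbb C[t]$ has bracket $[x\otimes p,y\otimes q]=[x,y]\otimes pq$. For $\nu_1,\nu_2\in P^+$, $\nu=\nu_1+\nu_2$, $F_{\nu_1,\nu_2}$ is the $\mathfrak{sl}_n\otimes\mathbb C[t]$-module generated by $\mathbb 1$ subject to $(\mathfrak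 n^+\otimes\mathbb C[t]).\mathbb 1=0$, $(\mathfrak h\otimes t\mathbb C[t]).\mathbb 1=0$, $(\mathfrak n^-\otimes t^2\mathbb C[t]).\mathbb 1=0$, $(h\otimes1).\mathbb 1=\nu(h)\mathbb 1$, and for $\alpha\in R^+$: $(f_\alpha\otimes1)^{\nu(h_\alpha)+1}.\mathbb 1=0$, $(f_\alpha\otimes t)^{\min\{\nu_1(h_\alpha),\nu_2(h_\alpha)\}+1}.\mathbb 1=0$. *)

theory Defs
  imports Complex_Main
begin

text \<open>Matrices of size n (entries outside {0..<n}^2 are zero) model sl_n.
  Index i in {0..<n}; positive roots are pairs (i,j) with i < j < n,
  alpha = eps_i - eps_j; e_alpha = E_ij, f_alpha = E_ji, h_alpha = E_ii - E_jj.\<close>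

type_synonym mat = "nat \<Rightarrow> nat \<Rightarrow> complex"

definition sl :: "nat \<Rightarrow> mat set" where
  "sl n = {X. (\<forall>i j. (n \<le> i \<or> n \<le> j) \<longrightarrow> X i j = 0) \<and> (\<Sum>i<n. X i i) = 0}"

definition mmul :: "nat \<Rightarrow> mat \<Rightarrow> mat \<Rightarrow> mat" where
  "mmul n X Y = (\<lambda>i j. \<Sum>k<n. X i k * Y k j)"

definition bracket :: "nat \<Rightarrow> mat \<Rightarrow> mat \<Rightarrow> mat" where
  "bracket n X Y = (\<lambda>i j. mmul n X Y i j - mmul n Y X i j)"

definition mlin :: "complex \<Rightarrow> mat \<Rightarrow> complex \<Rightarrow> mat \<Rightarrow> mat" where
  "mlin c X d Y = (\<lambda>i j. c * X i j + d * Y i j)"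

definition Emat :: "nat \<Rightarrow> nat \<Rightarrow> mat" where
  "Emat p q = (\<lambda>i j. if i = p \<and> j = q then 1 else 0)"

definition nplus :: "nat \<Rightarrow> mat set" where
  "nplus n = {X \<in> sl n. \<forall>i j. X i j \<noteq> 0 \<longrightarrow> i < j}"
definition cartan :: "nat \<Rightarrow> mat set" where
  "cartan n = {X \<in> sl n. \<forall>i j. X i j \<noteq> 0 \<longrightarrow> i = j}"
definition nminus :: "nat \<Rightarrow> mat set" where
  "nminus n = {X \<in> sl n. \<forall>i j. X i j \<noteq> 0 \<longrightarrow> j < i}"

definition pos_roots :: "nat \<Rightarrow> (nat \<times> nat) set" where
  "pos_roots n = {(i, j). i < j \<and> j < n}"

definition f_root :: "nat \<times> nat \<Rightarrow> mat" where
  "f_root \<alpha> = Emat (snd \<alpha>) (fst \<alpha>)"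

text \<open>Integral weights are given by their coordinates a k = lambda(h_{alpha_k}) with
  respect to the fundamental weights omega_k (k < n - 1); coordinates k >= n - 1 are 0.
  Dominant integral weights P^+ are those with nonnegative coordinates.\<close>
type_synonym weight = "nat \<Rightarrow> int"

definition Pplus :: "nat \<Rightarrow> weight set" where
  "Pplus n = {a. (\<forall>k. 0 \<le> a k) \<and> (\<forall>k. n - 1 \<le> k \<longrightarrow> a k = 0)}"

definition wadd :: "weight \<Rightarrow> weight \<Rightarrow> weight" where
  "wadd a b = (\<lambda>k. a k + b k)"
definition wsub :: "weight \<Rightarrow> weight \<Rightarrow> weight" where
  "wsub a b = (\<lambda>k. a k - b k)"

text \<open>lambda(h) for h in the Cartan subalgebra: lambda = sum a_k omega_k,
  omega_k(h) = h_00 + ... + h_kk.\<close>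
definition weval :: "nat \<Rightarrow> weight \<Rightarrow> mat \<Rightarrow> complex" where
  "weval n a H = (\<Sum>k<n - 1. of_int (a k) * (\<Sum>l\<le>k. H l l))"

text \<open>lambda(h_alpha) for alpha = eps_i - eps_j = alpha_i + ... + alpha_{j-1}.\<close>
definition wcoroot :: "weight \<Rightarrow> nat \<times> nat \<Rightarrow> int" where
  "wcoroot a \<alpha> = (\<Sum>k\<in>{fst \<alpha>..<snd \<alpha>}. a k)"

definition preceq2 :: "nat \<Rightarrow> weight \<Rightarrow> weight \<Rightarrow> weight \<Rightarrow> bool" where
  "preceq2 n lam lam1 mu1 \<longleftrightarrow>
     (\<forall>\<alpha>\<in>pos_roots n.
        min (wcoroot lam1 \<alpha>) (wcoroot (wsub lam lam1) \<alpha>)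
          \<le> min (wcoroot mu1 \<alpha>) (wcoroot (wsub lam mu1) \<alpha>))"

text \<open>A module for sl_n \<otimes> C[t] on a complex vector space (type 'v with scalar
  multiplication sc).  act X k is the action of X \<otimes> t^k; these elements span
  the current algebra, and the conditions below say exactly that the induced map is a
  Lie algebra representation.\<close>
definition current_module ::
  "nat \<Rightarrow> (complex \<Rightarrow> 'v::ab_group_add \<Rightarrow> 'v) \<Rightarrow> (mat \<Rightarrow> nat \<Rightarrow> 'v \<Rightarrow> 'v) \<Rightarrow> bool" where
  "current_module n sc act \<longleftrightarrow>
     vector_space sc \<and>
     (\<forall>X\<in>sl n. \<forall>k. Vector_Spaces.linear sc sc (act X k)) \<and>
     (\<forall>X\<in>sl n. \<forall>Y\<in>sl n. \<forall>c d k v.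
        act (mlin c X d Y) k v = sc c (act X k v) + sc d (act Y k v)) \<and>
     (\<forall>X\<in>sl n. \<forall>Y\<in>sl n. \<forall>k l v.
        act (bracket n X Y) (k + l) v = act X k (act Y l v) - act Y l (act X k v))"

definition module_hom_cur ::
  "nat \<Rightarrow> (complex \<Rightarrow> 'a::ab_group_add \<Rightarrow> 'a) \<Rightarrow> (mat \<Rightarrow> nat \<Rightarrow> 'a \<Rightarrow> 'a)
     \<Rightarrow> (complex \<Rightarrow> 'b::ab_group_add \<Rightarrow> 'b) \<Rightarrow> (mat \<Rightarrow> nat \<Rightarrow> 'b \<Rightarrow> 'b) \<Rightarrow> ('a \<Rightarrow> 'b) \<Rightarrow> bool" where
  "module_hom_cur n sc1 act1 sc2 act2 \<phi> \<longleftrightarrow>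
     Vector_Spaces.linear sc1 sc2 \<phi> \<and>
     (\<forall>X\<in>sl n. \<forall>k v. \<phi> (act1 X k v) = act2 X k (\<phi> v))"

inductive_set gen_sub ::
  "nat \<Rightarrow> (complex \<Rightarrow> 'v::ab_group_add \<Rightarrow> 'v) \<Rightarrow> (mat \<Rightarrow> nat \<Rightarrow> 'v \<Rightarrow> 'v) \<Rightarrow> 'v \<Rightarrow> 'v set"
  for n sc act w where
  gen_base: "w \<in> gen_sub n sc act w"
| gen_add: "u \<in> gen_sub n sc act w \<Longrightarrow> v \<in> gen_sub n sc act w \<Longrightarrow> u + v \<in> gen_sub n sc act w"
| gen_scale: "v \<in> gen_sub n sc act w \<Longrightarrow> sc c v \<in> gen_sub n sc act w"
| gen_act: "X \<in> sl n \<Longrightarrow> v \<in> gen_sub n sc act w \<Longrightarrow> act X k v \<in> gen_sub n sc act w"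

definition F_relations ::
  "nat \<Rightarrow> weight \<Rightarrow> weight \<Rightarrow> (complex \<Rightarrow> 'v::ab_group_add \<Rightarrow> 'v) \<Rightarrow> (mat \<Rightarrow> nat \<Rightarrow> 'v \<Rightarrow> 'v) \<Rightarrow> 'v \<Rightarrow> bool" where
  "F_relations n nu1 nu2 sc act w \<longleftrightarrow>
     (let nu = wadd nu1 nu2 in
     (\<forall>X\<in>nplus n. \<forall>k. act X k w = 0) \<and>
     (\<forall>H\<in>cartan n. \<forall>k. 1 \<le> k \<longrightarrow> act H k w = 0) \<and>
     (\<forall>X\<in>nminus n. \<forall>k. 2 \<le> k \<longrightarrow> act X k w = 0) \<and>
     (\<forall>H\<in>cartan n. act H 0 w = sc (weval n nu H) w) \<and>
     (\<forall>\<alpha>\<in>pos_roots n. (act (f_root \<alpha>) 0 ^^ nat (wcoroot nu \<alpha> + 1)) w = 0) \<and>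
     (\<forall>\<alpha>\<in>pos_roots n.
        (act (f_root \<alpha>) 1 ^^ nat (min (wcoroot nu1 \<alpha>) (wcoroot nu2 \<alpha>) + 1)) w = 0))"

text \<open>(V, sc, act, w) is (a copy of) F_{nu1,nu2} with cyclic generator w: a module generated
  by w subject to the relations, i.e. the relations hold, w generates, and (universal
  property) every module satisfying the relations at a vector m receives a homomorphism
  sending w to m.  Since HOL cannot quantify over types inside a definition, the
  universal property is stated for modules carried by an explicitly given type 'b.\<close>
definition is_F ::
  "'b::ab_group_add itself \<Rightarrow> nat \<Rightarrow> weight \<Rightarrow> weight \<Rightarrow>
     (complex \<Rightarrow> 'v::ab_group_add \<Rightarrow> 'v) \<Rightarrow> (mat \<Rightarrow> nat \<Rightarrow> 'v \<Rightarrow> 'v) \<Rightarrow> 'v \<Rightarrow> bool" where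
  "is_F (T::'b itself) n nu1 nu2 sc act w \<longleftrightarrow>
     current_module n sc act \<and> F_relations n nu1 nu2 sc act w \<and>
     gen_sub n sc act w = UNIV \<and>
     (\<forall>(sc' :: complex \<Rightarrow> 'b \<Rightarrow> 'b) act' m.
        current_module n sc' act' \<and> F_relations n nu1 nu2 sc' act' m \<longrightarrow>
        (\<exists>\<phi>. module_hom_cur n sc act sc' act' \<phi> \<and> \<phi> w = m))"

end

theory Submission
  imports Defs
begin

text \<open>By the universal property of F(mu1, lam - mu1) it suffices to check that its defining
  relations hold at the generator of F(lam1, lam - lam1). Both modules have highest weight lam,
  so the only relations that differ are the nilpotency bounds for f_alpha \<otimes> t, and the order
  on pairs says precisely that the bound for F(lam1, lam - lam1) is the stronger one. The
  resulting homomorphism is surjective because its image contains the cyclic generator.\<close>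

lemma funpow_eq_0_mono:
  fixes f :: "'a::zero \<Rightarrow> 'a"
  assumes "f 0 = 0" and "(f ^^ k) w = 0" and "k \<le> m"
  shows "(f ^^ m) w = 0"
proof -
  have funpow_0: "(f ^^ j) 0 = 0" for j
    by (induction j) (simp_all add: assms(1))
  have "(f ^^ m) w = (f ^^ (m - k)) ((f ^^ k) w)"
    using assms(3) by (metis funpow_add le_add_diff_inverse2 comp_apply)
  with assms(2) funpow_0 show ?thesis by simp
qed

lemma f_root_in_sl:
  assumes "\<alpha> \<in> pos_roots n"
  shows "f_root \<alpha> \<in> sl n"
proof -
  obtain i j where \<alpha>: "\<alpha> = (i, j)" "i < j" "j < n"
    using assms unfolding pos_roots_def by auto
  have "(\<Sum>l<n. Emat j i l l) = 0"
    using \<alpha> by (simp add: Emat_def sum.neutral)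
  with \<alpha> show ?thesis
    unfolding sl_def f_root_def by (auto simp: Emat_def)
qed

lemma F_relations_preceq2:
  assumes "current_module n sc act"
    and "preceq2 n lam lam1 mu1"
    and "F_relations n lam1 (wsub lam lam1) sc act w"
  shows "F_relations n mu1 (wsub lam mu1) sc act w"
proof -
  have same_weight: "wadd nu (wsub lam nu) = lam" for nu
    by (simp add: wadd_def wsub_def)
  have "(act (f_root \<alpha>) 1 ^^ nat (min (wcoroot mu1 \<alpha>) (wcoroot (wsub lam mu1) \<alpha>) + 1)) w = 0"
    if \<alpha>: "\<alpha> \<in> pos_roots n" for \<alpha>
  proof (rule funpow_eq_0_mono)
    have "Vector_Spaces.linear sc sc (act (f_root \<alpha>) 1)"
      using assms(1) f_root_in_sl[OF \<alpha>] unfolding current_module_def by blast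
    then show "act (f_root \<alpha>) 1 0 = 0"
      by (simp add: linear_iff_module_hom module_hom.zero)
    show "(act (f_root \<alpha>) 1 ^^ nat (min (wcoroot lam1 \<alpha>) (wcoroot (wsub lam lam1) \<alpha>) + 1)) w = 0"
      using assms(3) \<alpha> unfolding F_relations_def Let_def by blast
    show "nat (min (wcoroot lam1 \<alpha>) (wcoroot (wsub lam lam1) \<alpha>) + 1)
        \<le> nat (min (wcoroot mu1 \<alpha>) (wcoroot (wsub lam mu1) \<alpha>) + 1)"
      using assms(2) \<alpha> unfolding preceq2_def by (intro nat_mono) auto
  qed
  with assms(3) show ?thesis
    unfolding F_relations_def Let_def same_weight by blast
qed

lemma gen_sub_subset_range:
  assumes "module_hom_cur n sc1 act1 sc2 act2 \<phi>" and "\<phi> w1 = w2"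
  shows "gen_sub n sc2 act2 w2 \<subseteq> range \<phi>"
proof
  have lin: "Vector_Spaces.linear sc1 sc2 \<phi>"
    and equivariant: "\<And>X k v. X \<in> sl n \<Longrightarrow> \<phi> (act1 X k v) = act2 X k (\<phi> v)"
    using assms(1) unfolding module_hom_cur_def by auto
  fix v assume "v \<in> gen_sub n sc2 act2 w2"
  then show "v \<in> range \<phi>"
  proof (induction rule: gen_sub.induct)
    case gen_base
    then show ?case using assms(2) by blast
  next
    case (gen_add u v)
    then obtain x y where "u = \<phi> x" "v = \<phi> y" by blast
    then have "u + v = \<phi> (x + y)" using lin by (simp add: linear_iff_module_hom module_hom.add)
    then show ?case by blast
  next
    case (gen_scale v c)
    then obtain x where "v = \<phi> x" by blast
    then have "sc2 c v = \<phi> (sc1 c x)" using lin by (simp add: linear_iff_module_hom module_hom.scale)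
    then show ?case by blast
  next
    case (gen_act X v k)
    then obtain x where "v = \<phi> x" by blast
    then have "act2 X k v = \<phi> (act1 X k x)" using equivariant gen_act(1) by simp
    then show ?case by blast
  qed
qed

theorem lemma9p1:
  fixes n :: nat and lam lam1 mu1 :: weight
    and sc1 :: "complex \<Rightarrow> 'a::ab_group_add \<Rightarrow> 'a" and act1 :: "mat \<Rightarrow> nat \<Rightarrow> 'a \<Rightarrow> 'a" and w1 :: 'a
    and sc2 :: "complex \<Rightarrow> 'b::ab_group_add \<Rightarrow> 'b" and act2 :: "mat \<Rightarrow> nat \<Rightarrow> 'b \<Rightarrow> 'b" and w2 :: 'b
  assumes "lam \<in> Pplus n" and "lam1 \<in> Pplus n" and "mu1 \<in> Pplus n"
    and "wsub lam lam1 \<in> Pplus n" and "wsub lam mu1 \<in> Pplus n"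
    and "preceq2 n lam lam1 mu1"
    and F1: "is_F TYPE('b) n mu1 (wsub lam mu1) sc1 act1 w1"
    and F2: "is_F TYPE('a) n lam1 (wsub lam lam1) sc2 act2 w2"
  shows "\<exists>\<phi>. module_hom_cur n sc1 act1 sc2 act2 \<phi> \<and> \<phi> w1 = w2 \<and> surj \<phi>"
proof -
  have module2: "current_module n sc2 act2"
    and relations2: "F_relations n lam1 (wsub lam lam1) sc2 act2 w2"
    and generated2: "gen_sub n sc2 act2 w2 = UNIV"
    using F2 unfolding is_F_def by auto
  have "F_relations n mu1 (wsub lam mu1) sc2 act2 w2"
    using F_relations_preceq2[OF module2 assms(6) relations2] .
  with F1 module2 obtain \<phi> where \<phi>: "module_hom_cur n sc1 act1 sc2 act2 \<phi>" "\<phi> w1 = w2"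
    unfolding is_F_def by blast
  moreover have "surj \<phi>"
    using gen_sub_subset_range[OF \<phi>] generated2 by blast
  ultimately show ?thesis by blast
qed

end
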